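(* Let $I\subseteq S=\Bbbk[x_1,\dots,x_n]$ be a squarefree monomial ideal which is Gotzmann in $S$. Then its squarefree lexification $L$ is Gotzmann in $S$.
   Context: Let $\Bbbk$ be a field, $S=\Bbbk[x_1,\dots,x_n]$, $R=S/(x_1^2,\dots,x_n^2)$, $\mathbf m=(x_1,\dots,x_n)$. All ideals are homogeneous. A monomial ideal is squarefree if its minimal monomial generators are squarefree. For a homogeneous ideal $I$, $I_d$ is its degree-$d$ component and $|I_d|$ its $\Bbbk$-dimension; $\mathbf m_1 I_d$ denotes the span of $\{x_j f: f\in I_d,\ 1\le j\le n\}$ (the degree $d+1$ component of the ideal generated by $I_d$). An ideal $I$ of $S$ (resp. $R$) is Gotzmann if for every $d$ and every homogeneous ideal $J$ of $S$ (resp. $R$) with $|J_d|=|I_d|$ one has $|\mathbf m_1 I_d|\le|\mathbf m_1 J_d|$. A monomial ideal of $R$ is lex if each degree component is spanned by an initial segment, in the lexicographic order with $x_1>\dots>x_n$, of the nonzero (i.e. squarefree) monomials of that degree. A squarefree monomial ideal $L\subseteq S$ is squarefree lex if $LR$ is lex in $R$. The squarefree lexification of a squarefree monomial ideal $I\subseteq S$ is the (unique) squarefree lex ideal $L\subseteq S$ having the same Hilbert function as $I$ in $S$ (equivalently, $LR$ is the lex ideal of $R$ with the same Hilbert function as $IR$). *)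

theory Defs
  imports Main HOL.Vector_Spaces "HOL-Library.Poly_Mapping"
begin

text \<open>Monomials in the variables x_0, x_1, ... are exponent vectors (nat =>0 nat);
  the paper's variable x_(i+1) is our variable index i.\<close>

type_synonym 'k poly = "(nat \<Rightarrow>\<^sub>0 nat) \<Rightarrow>\<^sub>0 'k"

definition mdeg :: "(nat \<Rightarrow>\<^sub>0 nat) \<Rightarrow> nat" where
  "mdeg m = (\<Sum>i\<in>Poly_Mapping.keys m. Poly_Mapping.lookup m i)"

definition in_vars :: "nat \<Rightarrow> (nat \<Rightarrow>\<^sub>0 nat) \<Rightarrow> bool" where
  "in_vars n m \<longleftrightarrow> Poly_Mapping.keys m \<subseteq> {..<n}"

definition polyS :: "nat \<Rightarrow> ('k::field) poly set" where
  "polyS n = {p. \<forall>m\<in>Poly_Mapping.keys p. in_vars n m}"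

definition pscale :: "'k::field \<Rightarrow> 'k poly \<Rightarrow> 'k poly" where
  "pscale c p = Poly_Mapping.map (\<lambda>a. c * a) p"

definition kdim :: "('k::field) poly set \<Rightarrow> nat" where
  "kdim V = vector_space.dim pscale V"

definition kspan :: "('k::field) poly set \<Rightarrow> 'k poly set" where
  "kspan V = module.span pscale V"

definition monom :: "(nat \<Rightarrow>\<^sub>0 nat) \<Rightarrow> ('k::field) poly" where
  "monom m = Poly_Mapping.single m 1"

definition var :: "nat \<Rightarrow> ('k::field) poly" where
  "var i = monom (Poly_Mapping.single i 1)"

definition hcomp :: "nat \<Rightarrow> ('k::field) poly \<Rightarrow> 'k poly" where
  "hcomp d p = Poly_Mapping.mapp (\<lambda>m a. if mdeg m = d then a else 0) p"

definition is_ideal :: "nat \<Rightarrow> ('k::field) poly set \<Rightarrow> bool" where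
  "is_ideal n J \<longleftrightarrow> J \<subseteq> polyS n \<and> 0 \<in> J \<and>
     (\<forall>p\<in>J. \<forall>q\<in>J. p + q \<in> J) \<and> (\<forall>p\<in>J. \<forall>q\<in>polyS n. q * p \<in> J)"

definition homogeneous_ideal :: "nat \<Rightarrow> ('k::field) poly set \<Rightarrow> bool" where
  "homogeneous_ideal n J \<longleftrightarrow> is_ideal n J \<and> (\<forall>p\<in>J. \<forall>d. hcomp d p \<in> J)"

definition ideal_gen :: "nat \<Rightarrow> ('k::field) poly set \<Rightarrow> 'k poly set" where
  "ideal_gen n G = \<Inter>{J. is_ideal n J \<and> G \<subseteq> J}"

definition degcomp :: "('k::field) poly set \<Rightarrow> nat \<Rightarrow> 'k poly set" where
  "degcomp I d = {p\<in>I. \<forall>m\<in>Poly_Mapping.keys p. mdeg m = d}"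

definition m1 :: "nat \<Rightarrow> ('k::field) poly set \<Rightarrow> 'k poly set" where
  "m1 n V = kspan {var j * f | j f. j < n \<and> f \<in> V}"

definition gotzmann :: "nat \<Rightarrow> ('k::field) poly set \<Rightarrow> bool" where
  "gotzmann n I \<longleftrightarrow> (\<forall>d. \<forall>J::'k poly set. homogeneous_ideal n J \<and> kdim (degcomp J d) = kdim (degcomp I d)
       \<longrightarrow> kdim (m1 n (degcomp I d)) \<le> kdim (m1 n (degcomp J d)))"

definition squarefree_mon :: "(nat \<Rightarrow>\<^sub>0 nat) \<Rightarrow> bool" where
  "squarefree_mon m \<longleftrightarrow> (\<forall>i. Poly_Mapping.lookup m i \<le> 1)"

definition squarefree_monomial_ideal :: "nat \<Rightarrow> ('k::field) poly set \<Rightarrow> bool" where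
  "squarefree_monomial_ideal n I \<longleftrightarrow>
     (\<exists>G. (\<forall>m\<in>G. in_vars n m \<and> squarefree_mon m) \<and> I = ideal_gen n (monom ` G))"

text \<open>lex order with x_1 > ... > x_n (our indices 0 < 1 < ...): u >_lex v\<close>
definition lex_gt :: "(nat \<Rightarrow>\<^sub>0 nat) \<Rightarrow> (nat \<Rightarrow>\<^sub>0 nat) \<Rightarrow> bool" where
  "lex_gt u v \<longleftrightarrow> (\<exists>i. Poly_Mapping.lookup v i < Poly_Mapping.lookup u i \<and> (\<forall>j<i. Poly_Mapping.lookup u j = Poly_Mapping.lookup v j))"

text \<open>L is squarefree lex: L is a squarefree monomial ideal and LR is lex in R, i.e.
  in each degree d the squarefree monomials (the nonzero monomials of R) lying in L
  form an initial lex segment of all squarefree monomials of degree d.\<close>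
definition squarefree_lex :: "nat \<Rightarrow> ('k::field) poly set \<Rightarrow> bool" where
  "squarefree_lex n L \<longleftrightarrow> squarefree_monomial_ideal n L \<and>
     (\<forall>u v. in_vars n u \<and> squarefree_mon u \<and> in_vars n v \<and> squarefree_mon v \<and>
        mdeg u = mdeg v \<and> lex_gt u v \<and> (monom v :: 'k poly) \<in> L \<longrightarrow> monom u \<in> L)"

end

theory Submission
  imports Defs
begin

(* A squarefree monomial ideal I of S = k[x_0..x_{n-1}] is determined by the
   family  F(I) = {A \<subseteq> {0..n-1}. x_A \<in> I}  of supports of its squarefree monomials; this
   family is closed upwards, and a monomial lies in I iff its support lies in F(I).
   Counting monomials by their support gives
     (1) dim I_d = f_d + \<Sum>_{k<d} f_k c(d,k),  where f_k = #{A \<in> F(I). |A| = k} and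
         c(d,k) = number of degree-d monomials with a fixed k-element support, so by
         triangularity the Hilbert function of I determines its f-vector;
     (2) dim m_1 I_d = dim I_{d+1} - f_{d+1} + |upper shadow of the d-th layer of F(I)|.
   If L is squarefree lex, every layer of F(L) is an initial segment in the lexicographic
   order of d-subsets, and a Kruskal-Katona type theorem (proved with Frankl's shifting
   compressions) says that initial segments have the smallest upper shadow among all
   families of the same size.  Hence dim m_1 L_d \<le> dim m_1 I_d \<le> dim m_1 J_d for every
   homogeneous J with dim J_d = dim L_d = dim I_d, i.e. L is Gotzmann. *)

abbreviation expo :: "(nat \<Rightarrow>\<^sub>0 nat) \<Rightarrow> nat \<Rightarrow> nat" where
  "expo \<equiv> Poly_Mapping.lookup"
abbreviation supp :: "(nat \<Rightarrow>\<^sub>0 nat) \<Rightarrow> nat set" where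
  "supp \<equiv> Poly_Mapping.keys"

lemma pscale_eq: "pscale c p = Poly_Mapping.single 0 c * p"
  unfolding pscale_def by (simp add: mult_map_scale_conv_mult[symmetric])

interpretation lin: vector_space "pscale :: 'k::field \<Rightarrow> 'k poly \<Rightarrow> 'k poly"
  by unfold_locales (simp_all add: pscale_eq algebra_simps single_add mult_single flip: mult.assoc)

lemma kdim_eq: "kdim V = lin.dim V" unfolding kdim_def ..
lemma kspan_eq: "kspan V = lin.span V" unfolding kspan_def ..

definition supported_on :: "(nat \<Rightarrow>\<^sub>0 nat) set \<Rightarrow> ('k::field) poly set" where
  "supported_on M = {p. Poly_Mapping.keys p \<subseteq> M}"

lemma pscale_monom: "pscale c (monom m) = Poly_Mapping.single m c"
  by (simp add: pscale_eq monom_def mult_single)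

lemma lookup_pscale: "Poly_Mapping.lookup (pscale c p) m = c * Poly_Mapping.lookup p m"
  by (simp add: pscale_def map.rep_eq when_def)

lemma poly_expand:
  "(p::'k::field poly) = (\<Sum>m\<in>Poly_Mapping.keys p. pscale (Poly_Mapping.lookup p m) (monom m))"
proof (rule poly_mapping_eqI)
  fix k
  have "Poly_Mapping.lookup (\<Sum>m\<in>Poly_Mapping.keys p. pscale (Poly_Mapping.lookup p m) (monom m)) k
      = (\<Sum>m\<in>Poly_Mapping.keys p. if m = k then Poly_Mapping.lookup p m else 0)"
    unfolding lookup_sum pscale_monom by (intro sum.cong refl) (simp add: lookup_single when_def)
  also have "\<dots> = Poly_Mapping.lookup p k" by (simp add: sum.delta' in_keys_iff)
  finally show "Poly_Mapping.lookup p k =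
      Poly_Mapping.lookup (\<Sum>m\<in>Poly_Mapping.keys p. pscale (Poly_Mapping.lookup p m) (monom m)) k" ..
qed

lemma subspace_supported_on: "lin.subspace (supported_on M :: 'k::field poly set)"
  unfolding lin.subspace_def supported_on_def
proof (intro conjI ballI allI)
  fix x y :: "'k poly"
  assume "x \<in> {p. Poly_Mapping.keys p \<subseteq> M}" "y \<in> {p. Poly_Mapping.keys p \<subseteq> M}"
  thus "x + y \<in> {p. Poly_Mapping.keys p \<subseteq> M}" using keys_add[of x y] by auto
next
  fix c and x :: "'k poly" assume "x \<in> {p. Poly_Mapping.keys p \<subseteq> M}"
  moreover have "Poly_Mapping.keys (pscale c x) \<subseteq> Poly_Mapping.keys x"
    by (auto simp: in_keys_iff lookup_pscale)
  ultimately show "pscale c x \<in> {p. Poly_Mapping.keys p \<subseteq> M}" by auto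
qed simp

lemma supported_on_span: "(supported_on M :: 'k::field poly set) = lin.span (monom ` M)"
proof
  show "supported_on M \<subseteq> lin.span (monom ` M)"
  proof
    fix p assume "p \<in> supported_on M"
    hence "Poly_Mapping.keys p \<subseteq> M" by (simp add: supported_on_def)
    hence "(\<Sum>m\<in>Poly_Mapping.keys p. pscale (Poly_Mapping.lookup p m) (monom m))
        \<in> lin.span (monom ` M)"
      by (intro lin.span_sum lin.span_scale lin.span_base) auto
    thus "p \<in> lin.span (monom ` M)" using poly_expand[of p] by simp
  qed
  show "lin.span (monom ` M) \<subseteq> supported_on M"
    by (rule lin.span_minimal)
      (auto simp: subspace_supported_on[unfolded supported_on_def] supported_on_def monom_def)
qed

lemma inj_monom: "inj (monom :: _ \<Rightarrow> 'k::field poly)"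
  by (rule injI) (metis monom_def lookup_single_eq lookup_single_not_eq zero_neq_one)

lemma independent_monoms:
  assumes "finite M" shows "lin.independent (monom ` M :: 'k::field poly set)"
proof (rule lin.independent_if_scalars_zero)
  show "finite (monom ` M :: 'k poly set)" using assms by simp
  fix f :: "'k poly \<Rightarrow> 'k" and x :: "'k poly"
  assume s: "(\<Sum>x\<in>monom ` M. pscale (f x) x) = 0" and x: "x \<in> monom ` M"
  then obtain m where m: "m \<in> M" "x = monom m" by auto
  have "(\<Sum>x\<in>monom ` M. pscale (f x) x) = (\<Sum>m'\<in>M. Poly_Mapping.single m' (f (monom m')))"
    by (subst sum.reindex) (auto intro: inj_on_subset[OF inj_monom] simp: pscale_monom)
  hence "Poly_Mapping.lookup (\<Sum>m'\<in>M. Poly_Mapping.single m' (f (monom m'))) m = 0" using s by simp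
  hence "f (monom m) = 0" using assms m(1) by (simp add: lookup_sum lookup_single when_def)
  thus "f x = 0" using m by simp
qed

(* The monomials form a basis, so the dimension of the space spanned by M is |M|. *)
lemma kdim_supported_on:
  assumes "finite M" shows "kdim (supported_on M :: 'k::field poly set) = card M"
proof -
  have "kdim (supported_on M :: 'k poly set) = card (monom ` M :: 'k poly set)"
    unfolding kdim_eq supported_on_span
    by (rule lin.dim_span_eq_card_independent[OF independent_monoms[OF assms]])
  also have "\<dots> = card M" by (rule card_image[OF inj_on_subset[OF inj_monom]]) simp
  finally show ?thesis .
qed

lemma keys_add_nat: "supp (a + b) = supp a \<union> supp b"
  by (auto simp: in_keys_iff lookup_add)

lemma mdeg_sum: "finite S \<Longrightarrow> supp m \<subseteq> S \<Longrightarrow> mdeg m = (\<Sum>i\<in>S. expo m i)"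
  unfolding mdeg_def by (rule sum.mono_neutral_left) (auto simp: in_keys_iff)

lemma mdeg_add: "mdeg (a + b) = mdeg a + mdeg b"
proof -
  let ?S = "supp a \<union> supp b"
  have "mdeg (a+b) = (\<Sum>i\<in>?S. expo (a+b) i)" by (rule mdeg_sum) (auto simp: keys_add_nat)
  also have "\<dots> = (\<Sum>i\<in>?S. expo a i) + (\<Sum>i\<in>?S. expo b i)" by (simp add: lookup_add sum.distrib)
  also have "\<dots> = mdeg a + mdeg b" by (simp add: mdeg_sum[symmetric])
  finally show ?thesis .
qed

lemma mdeg_single: "mdeg (Poly_Mapping.single j (k::nat)) = k"
  by (simp add: mdeg_def)

lemma lookup_le_mdeg: "expo m i \<le> mdeg m"
proof (cases "i \<in> supp m")
  case True thus ?thesis unfolding mdeg_def by (intro member_le_sum) auto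
qed (simp add: in_keys_iff)

definition monomials :: "nat \<Rightarrow> nat \<Rightarrow> (nat \<Rightarrow>\<^sub>0 nat) set" where
  "monomials n d = {m. in_vars n m \<and> mdeg m = d}"

lemma finite_monomials: "finite (monomials n d)"
proof -
  let ?F = "{f. \<forall>x. (x \<in> {..<n} \<longrightarrow> f x \<in> {..d}) \<and> (x \<notin> {..<n} \<longrightarrow> f x = (0::nat))}"
  have "expo ` monomials n d \<subseteq> ?F"
  proof clarify
    fix m x assume m: "m \<in> monomials n d"
    show "(x \<in> {..<n} \<longrightarrow> expo m x \<in> {..d}) \<and> (x \<notin> {..<n} \<longrightarrow> expo m x = 0)"
      using m lookup_le_mdeg[of m x] by (auto simp: monomials_def in_vars_def in_keys_iff)
  qed
  moreover have "finite ?F" by (rule finite_set_of_finite_funs) auto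
  ultimately have "finite (expo ` monomials n d)" by (rule finite_subset)
  moreover have "inj_on expo (monomials n d)" by (rule inj_onI) simp
  ultimately show ?thesis using finite_imageD by blast
qed

lemma in_vars_addD: "in_vars n (a + b) \<Longrightarrow> in_vars n b"
  unfolding in_vars_def keys_add_nat by blast

lemma in_vars_add: "in_vars n a \<Longrightarrow> in_vars n b \<Longrightarrow> in_vars n (a + b)"
  unfolding in_vars_def using keys_add[of a b] by auto

definition mon_ideal :: "nat \<Rightarrow> (nat \<Rightarrow>\<^sub>0 nat) set \<Rightarrow> ('k::field) poly set" where
  "mon_ideal n G = {p \<in> polyS n. \<forall>m\<in>Poly_Mapping.keys p. \<exists>g\<in>G. \<exists>h. m = g + h}"

lemma mon_ideal_is_ideal: "is_ideal n (mon_ideal n G :: 'k::field poly set)"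
  unfolding is_ideal_def
proof (intro conjI ballI)
  show "mon_ideal n G \<subseteq> polyS n" by (auto simp: mon_ideal_def)
  show "0 \<in> (mon_ideal n G :: 'k poly set)" by (simp add: mon_ideal_def polyS_def)
  fix p q :: "'k poly"
  assume p: "p \<in> mon_ideal n G"
  { assume q: "q \<in> mon_ideal n G"
    show "p + q \<in> mon_ideal n G" using p q keys_add[of p q]
      by (auto simp: mon_ideal_def polyS_def) }
  { assume q: "q \<in> polyS n"
    show "q * p \<in> mon_ideal n G"
      unfolding mon_ideal_def polyS_def
    proof (intro CollectI conjI ballI)
      fix m assume "m \<in> Poly_Mapping.keys (q * p)"
      then obtain a b where ab: "m = a + b" "a \<in> Poly_Mapping.keys q" "b \<in> Poly_Mapping.keys p"
        using keys_mult[of q p] by blast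
      then show "in_vars n m" using p q by (auto simp: mon_ideal_def polyS_def intro: in_vars_add)
      from ab p obtain g h where "g \<in> G" "b = g + h" by (auto simp: mon_ideal_def)
      then show "\<exists>g\<in>G. \<exists>h. m = g + h" using ab by (metis add.left_commute)
    qed }
qed

lemma sum_in_ideal:
  assumes "is_ideal n J" "finite A" "\<And>x. x \<in> A \<Longrightarrow> f x \<in> J" shows "sum f A \<in> J"
  using assms(2,3) by (induction A rule: finite_induct) (use assms(1) in \<open>auto simp: is_ideal_def\<close>)

lemma ideal_gen_eq_mon_ideal:
  assumes G: "\<forall>g\<in>G. in_vars n g"
  shows "ideal_gen n (monom ` G) = (mon_ideal n G :: 'k::field poly set)"
proof
  have "monom ` G \<subseteq> (mon_ideal n G :: 'k poly set)"
    using G by (auto simp: mon_ideal_def monom_def polyS_def) (metis add_0_right)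
  thus "ideal_gen n (monom ` G) \<subseteq> (mon_ideal n G :: 'k poly set)"
    unfolding ideal_gen_def using mon_ideal_is_ideal by blast
  show "mon_ideal n G \<subseteq> (ideal_gen n (monom ` G) :: 'k poly set)"
    unfolding ideal_gen_def
  proof (rule subsetI, rule InterI)
    fix p :: "'k poly" and J :: "'k poly set"
    assume p: "p \<in> mon_ideal n G" and "J \<in> {J. is_ideal n J \<and> monom ` G \<subseteq> J}"
    hence J: "is_ideal n J" "monom ` G \<subseteq> J" by auto
    have "(\<Sum>m\<in>Poly_Mapping.keys p. pscale (Poly_Mapping.lookup p m) (monom m)) \<in> J"
    proof (rule sum_in_ideal[OF J(1)], simp)
      fix m assume m: "m \<in> Poly_Mapping.keys p"
      then obtain g h where gh: "g \<in> G" "m = g + h" using p by (auto simp: mon_ideal_def)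
      have "in_vars n m" using m p by (auto simp: mon_ideal_def polyS_def)
      hence hv: "in_vars n h" using gh by (metis add.commute in_vars_addD)
      have "pscale (Poly_Mapping.lookup p m) (monom m) =
          Poly_Mapping.single h (Poly_Mapping.lookup p m) * monom g"
        unfolding pscale_monom by (simp add: monom_def mult_single gh add.commute)
      moreover have "Poly_Mapping.single h (Poly_Mapping.lookup p m) \<in> polyS n"
        using hv by (simp add: polyS_def)
      moreover have "monom g \<in> J" using J gh by auto
      ultimately show "pscale (Poly_Mapping.lookup p m) (monom m) \<in> J"
        using J(1) by (simp add: is_ideal_def)
    qed
    thus "p \<in> J" using poly_expand[of p] by simp
  qed
qed

lemma sqf_ideal_mon_ideal:
  assumes "squarefree_monomial_ideal n (I :: 'k::field poly set)"
  obtains G where "\<forall>g\<in>G. squarefree_mon g" "I = mon_ideal n G"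
proof -
  obtain G where G: "\<forall>m\<in>G. in_vars n m \<and> squarefree_mon m" "I = ideal_gen n (monom ` G)"
    using assms by (auto simp: squarefree_monomial_ideal_def)
  have "I = mon_ideal n G" using G ideal_gen_eq_mon_ideal[of G n] by simp
  thus thesis using that G(1) by blast
qed

definition ideal_monomials :: "nat \<Rightarrow> (nat \<Rightarrow>\<^sub>0 nat) set \<Rightarrow> nat \<Rightarrow> (nat \<Rightarrow>\<^sub>0 nat) set" where
  "ideal_monomials n G d = {m \<in> monomials n d. \<exists>g\<in>G. \<exists>h. m = g + h}"

lemma degcomp_mon_ideal:
  "degcomp (mon_ideal n G :: 'k::field poly set) d = supported_on (ideal_monomials n G d)"
  unfolding degcomp_def mon_ideal_def supported_on_def ideal_monomials_def monomials_def polyS_def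
    by blast

definition var_multiples :: "nat \<Rightarrow> (nat \<Rightarrow>\<^sub>0 nat) set \<Rightarrow> (nat \<Rightarrow>\<^sub>0 nat) set" where
  "var_multiples n M = {Poly_Mapping.single j 1 + m | j m. j < n \<and> m \<in> M}"

lemma m1_supported_on:
  "m1 n (supported_on M :: 'k::field poly set) = supported_on (var_multiples n M)"
proof
  show "m1 n (supported_on M :: 'k poly set) \<subseteq> supported_on (var_multiples n M)"
    unfolding m1_def kspan_eq
  proof (rule lin.span_minimal[OF _ subspace_supported_on], clarify)
    fix j and f :: "'k poly" assume j: "j < n" and f: "f \<in> supported_on M"
    have "Poly_Mapping.keys (var j * f) \<subseteq>
        {a + b | a b. a \<in> Poly_Mapping.keys (var j :: 'k poly) \<and> b \<in> Poly_Mapping.keys f}"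
      by (rule keys_mult)
    thus "var j * f \<in> supported_on (var_multiples n M)" using j f
      unfolding supported_on_def var_multiples_def var_def monom_def by (simp add: subset_iff) blast
  qed
  have "supported_on (var_multiples n M) = lin.span (monom ` var_multiples n M :: 'k poly set)"
    by (rule supported_on_span)
  also have "\<dots> \<subseteq> m1 n (supported_on M)"
    unfolding m1_def kspan_eq
  proof (rule lin.span_mono, rule subsetI)
    fix y assume "y \<in> (monom ` var_multiples n M :: 'k poly set)"
    then obtain j m where jm: "j < n" "m \<in> M" "y = monom (Poly_Mapping.single j 1 + m)"
      by (auto simp: var_multiples_def)
    have "(monom (Poly_Mapping.single j 1 + m) :: 'k poly) = var j * monom m"
      by (simp add: var_def monom_def mult_single)
    moreover have "(monom m :: 'k poly) \<in> supported_on M" using jm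
      by (simp add: supported_on_def monom_def)
    ultimately show "y \<in> {var j * f |j f. j < n \<and> f \<in> supported_on M}"
      using jm by blast
  qed
  finally show "supported_on (var_multiples n M) \<subseteq> (m1 n (supported_on M) :: 'k poly set)" .
qed

lemma var_multiples_subset: "M \<subseteq> monomials n d \<Longrightarrow> var_multiples n M \<subseteq> monomials n (Suc d)"
  by (auto simp: var_multiples_def monomials_def mdeg_add mdeg_single in_vars_def keys_add_nat
      subset_iff)

lemma finite_var_multiples: "M \<subseteq> monomials n d \<Longrightarrow> finite (var_multiples n M)"
  by (rule finite_subset[OF var_multiples_subset finite_monomials])

lemma finite_ideal_monomials: "finite (ideal_monomials n G d)"
  by (rule finite_subset[OF _ finite_monomials[of n d]]) (auto simp: ideal_monomials_def)

lemma kdim_deg: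
  "kdim (degcomp (mon_ideal n G :: 'k::field poly set) d) = card (ideal_monomials n G d)"
  unfolding degcomp_mon_ideal by (rule kdim_supported_on[OF finite_ideal_monomials])

lemma kdim_m1:
  "kdim (m1 n (degcomp (mon_ideal n G :: 'k::field poly set) d)) =
    card (var_multiples n (ideal_monomials n G d))"
  unfolding degcomp_mon_ideal m1_supported_on
  by (rule kdim_supported_on[OF finite_var_multiples[of _ n d]]) (auto simp: ideal_monomials_def)

definition sqf_mon :: "nat set \<Rightarrow> (nat \<Rightarrow>\<^sub>0 nat)" where
  "sqf_mon A = Abs_poly_mapping (\<lambda>i. if i \<in> A then 1 else 0)"

lemma lookup_sqf_mon: "finite A \<Longrightarrow> expo (sqf_mon A) i = (if i \<in> A then 1 else 0)"
  unfolding sqf_mon_def by (subst lookup_Abs_poly_mapping) (auto elim: finite_subset[rotated])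

lemma keys_sqf_mon: "finite A \<Longrightarrow> supp (sqf_mon A) = A"
  by (auto simp: in_keys_iff lookup_sqf_mon split: if_splits)

lemma mdeg_sqf_mon: "finite A \<Longrightarrow> mdeg (sqf_mon A) = card A"
  by (simp add: mdeg_def keys_sqf_mon lookup_sqf_mon)

lemma squarefree_sqf_mon: "finite A \<Longrightarrow> squarefree_mon (sqf_mon A)"
  by (simp add: squarefree_mon_def lookup_sqf_mon)

lemma squarefree_eq_sqf_mon: assumes "squarefree_mon m" shows "m = sqf_mon (supp m)"
proof (rule poly_mapping_eqI)
  fix k show "expo m k = expo (sqf_mon (supp m)) k"
    using assms[unfolded squarefree_mon_def, rule_format, of k]
    by (cases "expo m k") (auto simp: lookup_sqf_mon in_keys_iff)
qed

lemma sqf_mon_insert: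
  "finite A \<Longrightarrow> j \<notin> A \<Longrightarrow> sqf_mon (insert j A) = Poly_Mapping.single j 1 + sqf_mon A"
  by (rule poly_mapping_eqI) (auto simp: lookup_add lookup_sqf_mon lookup_single when_def)

lemma card_keys_le_mdeg: "card (supp m) \<le> mdeg m"
  unfolding mdeg_def
  using sum_mono[of "supp m" "\<lambda>_. 1::nat" "expo m"] by (auto simp: in_keys_iff)

lemma squarefree_if_mdeg_eq_card: assumes "mdeg m = card (supp m)" shows "squarefree_mon m"
  unfolding squarefree_mon_def
proof (rule ccontr)
  assume "\<not> (\<forall>i. expo m i \<le> 1)"
  then obtain i where i: "expo m i > 1" by (auto simp: not_le)
  hence ik: "i \<in> supp m" by (auto simp: in_keys_iff)
  have "card (supp m) = (\<Sum>j\<in>supp m. (1::nat))" by simp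
  also have "\<dots> < (\<Sum>j\<in>supp m. expo m j)"
    by (rule sum_strict_mono_ex1) (use i ik in \<open>auto simp: in_keys_iff\<close>)
  finally show False using assms by (simp add: mdeg_def)
qed

lemma divides_iff_keys:
  assumes "squarefree_mon g"
  shows "(\<exists>h. m = g + h) \<longleftrightarrow> supp g \<subseteq> supp m"
proof
  assume "\<exists>h. m = g + h" thus "supp g \<subseteq> supp m" by (auto simp: keys_add_nat)
next
  assume sub: "supp g \<subseteq> supp m"
  have "m = g + (m - g)"
  proof (rule poly_mapping_eqI)
    fix k
    have "expo g k \<le> 1" using assms by (simp add: squarefree_mon_def)
    moreover have "expo g k \<noteq> 0 \<Longrightarrow> expo m k \<noteq> 0" using sub by (metis in_keys_iff subsetD)
    ultimately have "expo g k \<le> expo m k" by linarith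
    thus "expo m k = expo (g + (m - g)) k" by (simp add: lookup_add lookup_minus)
  qed
  thus "\<exists>h. m = g + h" ..
qed

definition supp_family :: "nat \<Rightarrow> (nat \<Rightarrow>\<^sub>0 nat) set \<Rightarrow> nat set set" where
  "supp_family n G = {A. A \<subseteq> {..<n} \<and> (\<exists>g\<in>G. supp g \<subseteq> A)}"

definition layer :: "nat set set \<Rightarrow> nat \<Rightarrow> nat set set" where
  "layer \<F> k = {A\<in>\<F>. card A = k}"

definition upper_shadow :: "nat \<Rightarrow> nat \<Rightarrow> nat set set \<Rightarrow> nat set set" where
  "upper_shadow n k \<A> = {B. B \<subseteq> {..<n} \<and> card B = Suc k \<and> (\<exists>A\<in>\<A>. A \<subseteq> B)}"

lemma supp_family_subset: "A \<in> supp_family n G \<Longrightarrow> A \<subseteq> {..<n}"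
  by (simp add: supp_family_def)

lemma supp_family_up: "A \<in> supp_family n G \<Longrightarrow> A \<subseteq> B \<Longrightarrow> B \<subseteq> {..<n} \<Longrightarrow> B \<in> supp_family n G"
  unfolding supp_family_def by blast

lemma finite_supp_family: "finite (supp_family n G)"
  by (rule finite_subset[of _ "Pow {..<n}"]) (auto simp: supp_family_def)

lemma finite_supp_family_member: "A \<in> supp_family n G \<Longrightarrow> finite A"
  using finite_subset[OF supp_family_subset] by blast

lemma upper_shadow_layer:
  "upper_shadow n d (layer (supp_family n G) d) \<subseteq> layer (supp_family n G) (Suc d)"
  unfolding upper_shadow_def layer_def using supp_family_up by blast

lemma ideal_monomials_supp:
  assumes G: "\<forall>g\<in>G. squarefree_mon g"
  shows "ideal_monomials n G d = {m\<in>monomials n d. supp m \<in> supp_family n G}"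
  unfolding ideal_monomials_def supp_family_def monomials_def in_vars_def
  using G by (auto simp: divides_iff_keys)

lemma monom_in_mon_ideal:
  assumes G: "\<forall>g\<in>G. squarefree_mon g" and fA: "finite A"
  shows "((monom (sqf_mon A) :: 'k::field poly) \<in> mon_ideal n G) \<longleftrightarrow> A \<in> supp_family n G"
proof -
  have "((monom (sqf_mon A) :: 'k poly) \<in> mon_ideal n G) \<longleftrightarrow>
      in_vars n (sqf_mon A) \<and> (\<exists>g\<in>G. \<exists>h. sqf_mon A = g + h)"
    by (simp add: mon_ideal_def polyS_def monom_def)
  also have "\<dots> \<longleftrightarrow> A \<subseteq> {..<n} \<and> (\<exists>g\<in>G. supp g \<subseteq> A)"
    using G divides_iff_keys keys_sqf_mon[OF fA] by (simp add: in_vars_def)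
  finally show ?thesis by (simp add: supp_family_def)
qed

lemma sqf_mon_in_ideal_monomials:
  assumes G: "\<forall>g\<in>G. squarefree_mon g" and A: "A \<in> layer (supp_family n G) d"
  shows "sqf_mon A \<in> ideal_monomials n G d"
  using A finite_supp_family_member[of A n G] supp_family_subset[of A n G]
  by (auto simp: ideal_monomials_supp[OF G] monomials_def in_vars_def keys_sqf_mon mdeg_sqf_mon
      layer_def)

(* The (d+1)-sets of the support family outside the upper shadow of its d-th layer: their
   monomials are the squarefree monomials of degree d+1 of the ideal that are not of the form
   x_j m with m a monomial of degree d of the ideal. *)
definition new_sets :: "nat \<Rightarrow> (nat \<Rightarrow>\<^sub>0 nat) set \<Rightarrow> nat \<Rightarrow> nat set set" where
  "new_sets n G d = layer (supp_family n G) (Suc d) - upper_shadow n d (layer (supp_family n G) d)"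

lemma var_multiples_in_ideal_monomials:
  assumes G: "\<forall>g\<in>G. squarefree_mon g"
  shows "var_multiples n (ideal_monomials n G d) \<subseteq> ideal_monomials n G (Suc d)"
proof
  fix x assume "x \<in> var_multiples n (ideal_monomials n G d)"
  then obtain j m where jm: "j < n" "m \<in> ideal_monomials n G d" "x = Poly_Mapping.single j 1 + m"
    by (auto simp: var_multiples_def)
  have "m \<in> monomials n d" "supp m \<in> supp_family n G"
    using jm(2) by (auto simp: ideal_monomials_supp[OF G])
  moreover have "supp x = insert j (supp m)" using jm(3) by (simp add: keys_add_nat)
  ultimately show "x \<in> ideal_monomials n G (Suc d)"
    using jm by (auto simp: ideal_monomials_supp[OF G] monomials_def in_vars_def mdeg_add
        mdeg_single
        intro: supp_family_up)
qed

lemma var_multiple_not_new: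
  assumes G: "\<forall>g\<in>G. squarefree_mon g" and x: "x \<in> var_multiples n (ideal_monomials n G d)"
  shows "x \<notin> sqf_mon ` new_sets n G d"
proof
  assume "x \<in> sqf_mon ` new_sets n G d"
  then obtain B where B: "B \<in> layer (supp_family n G) (Suc d)"
    "B \<notin> upper_shadow n d (layer (supp_family n G) d)" "x = sqf_mon B"
    by (auto simp: new_sets_def)
  obtain j m where jm: "j < n" "m \<in> ideal_monomials n G d" "x = Poly_Mapping.single j 1 + m"
    using x by (auto simp: var_multiples_def)
  have fB: "finite B" and Bn: "B \<subseteq> {..<n}" and cB: "card B = Suc d"
    using B(1) finite_supp_family_member[of B n G] supp_family_subset[of B n G]
      by (auto simp: layer_def)
  have kB: "supp x = B" using B(3) fB by (simp add: keys_sqf_mon)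
  have kx: "supp x = insert j (supp m)" using jm(3) by (simp add: keys_add_nat)
  have "expo x j = 1 + expo m j" using jm(3) by (simp add: lookup_add)
  moreover have "expo x j \<le> 1" using B(3) fB by (simp add: lookup_sqf_mon)
  ultimately have "j \<notin> supp m" by (simp add: in_keys_iff)
  hence "card (supp m) = d" using cB kB kx card_insert_disjoint[of "supp m" j] by simp
  hence "supp m \<in> layer (supp_family n G) d" using jm(2)
    by (simp add: ideal_monomials_supp[OF G] layer_def)
  hence "B \<in> upper_shadow n d (layer (supp_family n G) d)"
    using Bn cB kB kx unfolding upper_shadow_def by blast
  thus False using B(2) by simp
qed

(* A non-squarefree monomial x_j^2 m' of the ideal is x_j times a monomial with the same
   support, hence also in the ideal. *)
lemma nonsquarefree_in_var_multiples:
  assumes G: "\<forall>g\<in>G. squarefree_mon g"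
    and x: "x \<in> ideal_monomials n G (Suc d)" and nsq: "\<not> squarefree_mon x"
  shows "x \<in> var_multiples n (ideal_monomials n G d)"
proof -
  have xM: "x \<in> monomials n (Suc d)" "supp x \<in> supp_family n G"
    using x by (auto simp: ideal_monomials_supp[OF G])
  obtain j where j: "expo x j > 1" using nsq by (auto simp: squarefree_mon_def not_le)
  define m where "m = x - Poly_Mapping.single j 1"
  have xm: "x = Poly_Mapping.single j 1 + m"
    by (rule poly_mapping_eqI)
      (use j in \<open>auto simp: m_def lookup_add lookup_minus lookup_single when_def\<close>)
  have km: "supp m = supp x"
    using j by (auto simp: m_def in_keys_iff lookup_minus lookup_single when_def)
  have "mdeg x = Suc (mdeg m)" using xm by (simp add: mdeg_add mdeg_single)
  hence "m \<in> ideal_monomials n G d"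
    using xM km by (auto simp: ideal_monomials_supp[OF G] monomials_def in_vars_def)
  moreover have "j \<in> supp x" using j by (simp add: in_keys_iff)
  hence "j < n" using xM(1) by (auto simp: monomials_def in_vars_def)
  ultimately show ?thesis unfolding var_multiples_def using xm by blast
qed

lemma insert_of_card:
  assumes "A \<subseteq> B" "finite B" "card B = Suc (card A)"
  obtains x where "x \<notin> A" "B = insert x A"
proof -
  have fA: "finite A" using assms finite_subset by blast
  have "card (B - A) = 1" using assms fA by (simp add: card_Diff_subset)
  then obtain x where "B - A = {x}" by (auto simp: card_Suc_eq)
  thus thesis using that assms(1) by blast
qed

lemma squarefree_in_var_multiples:
  assumes G: "\<forall>g\<in>G. squarefree_mon g"
    and x: "x \<in> ideal_monomials n G (Suc d)" and sq: "squarefree_mon x"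
    and not_new: "x \<notin> sqf_mon ` new_sets n G d"
  shows "x \<in> var_multiples n (ideal_monomials n G d)"
proof -
  have xM: "x \<in> monomials n (Suc d)" "supp x \<in> supp_family n G"
    using x by (auto simp: ideal_monomials_supp[OF G])
  have xn: "supp x \<subseteq> {..<n}" using xM by (simp add: monomials_def in_vars_def)
  have xs: "x = sqf_mon (supp x)" using sq by (rule squarefree_eq_sqf_mon)
  have cx: "card (supp x) = Suc d" using xM(1) mdeg_sqf_mon[of "supp x"] xs
    by (simp add: monomials_def)
  hence "supp x \<in> layer (supp_family n G) (Suc d)" using xM by (simp add: layer_def)
  hence "supp x \<in> upper_shadow n d (layer (supp_family n G) d)"
    using not_new xs by (auto simp: new_sets_def)
  then obtain A where A: "A \<in> layer (supp_family n G) d" "A \<subseteq> supp x"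
    unfolding upper_shadow_def by blast
  have fA: "finite A" by (rule finite_subset[OF A(2)]) simp
  obtain j where j: "j \<notin> A" "supp x = insert j A"
    using insert_of_card[OF A(2)] cx A(1) by (auto simp: layer_def)
  have "x = Poly_Mapping.single j 1 + sqf_mon A" using xs j sqf_mon_insert[OF fA] by simp
  moreover have "sqf_mon A \<in> ideal_monomials n G d" by (rule sqf_mon_in_ideal_monomials[OF G A(1)])
  moreover have "j < n" using j xn by auto
  ultimately show ?thesis unfolding var_multiples_def by blast
qed

lemma var_multiples_ideal_monomials:
  assumes G: "\<forall>g\<in>G. squarefree_mon g"
  shows "var_multiples n (ideal_monomials n G d) =
    ideal_monomials n G (Suc d) - sqf_mon ` new_sets n G d"
proof
  show "var_multiples n (ideal_monomials n G d) \<subseteq>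
      ideal_monomials n G (Suc d) - sqf_mon ` new_sets n G d"
    using var_multiples_in_ideal_monomials[OF G] var_multiple_not_new[OF G] by blast
  show "ideal_monomials n G (Suc d) - sqf_mon ` new_sets n G d \<subseteq>
      var_multiples n (ideal_monomials n G d)"
  proof
    fix x assume "x \<in> ideal_monomials n G (Suc d) - sqf_mon ` new_sets n G d"
    thus "x \<in> var_multiples n (ideal_monomials n G d)"
      using nonsquarefree_in_var_multiples[OF G] squarefree_in_var_multiples[OF G]
      by (cases "squarefree_mon x") auto
  qed
qed

lemma card_var_multiples:
  assumes G: "\<forall>g\<in>G. squarefree_mon g"
  shows "card (var_multiples n (ideal_monomials n G d)) + card (layer (supp_family n G) (Suc d)) =
         card (ideal_monomials n G (Suc d)) + card (upper_shadow n d (layer (supp_family n G) d))"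
proof -
  let ?X = "new_sets n G d" and ?U = "upper_shadow n d (layer (supp_family n G) d)"
  have fin: "\<And>A. A \<in> ?X \<Longrightarrow> finite A"
    using finite_supp_family_member by (auto simp: new_sets_def layer_def)
  have inj: "inj_on sqf_mon ?X" by (rule inj_onI) (metis fin keys_sqf_mon)
  have sub: "sqf_mon ` ?X \<subseteq> ideal_monomials n G (Suc d)"
    using sqf_mon_in_ideal_monomials[OF G] by (auto simp: new_sets_def)
  have fM: "finite (ideal_monomials n G (Suc d))" by (rule finite_ideal_monomials)
  have fU: "finite ?U"
    by (rule finite_subset[OF upper_shadow_layer]) (simp add: layer_def finite_supp_family)
  have "card (var_multiples n (ideal_monomials n G d)) =
      card (ideal_monomials n G (Suc d)) - card ?X"
    unfolding var_multiples_ideal_monomials[OF G]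
    using sub fM by (simp add: card_Diff_subset card_image[OF inj, symmetric] finite_subset)
  moreover have "card ?X = card (layer (supp_family n G) (Suc d)) - card ?U"
    unfolding new_sets_def by (rule card_Diff_subset[OF fU upper_shadow_layer])
  moreover have "card ?X \<le> card (ideal_monomials n G (Suc d))"
    using sub fM card_mono card_image[OF inj] by metis
  moreover have "card ?U \<le> card (layer (supp_family n G) (Suc d))"
    using upper_shadow_layer finite_supp_family by (intro card_mono) (auto simp: layer_def)
  ultimately show ?thesis by linarith
qed

(* Counting monomials by their support.  The monomials of degree d with support F; their
   number only depends on |F| and is called support_count d |F|. *)
definition mons_with_supp :: "nat \<Rightarrow> nat set \<Rightarrow> (nat \<Rightarrow>\<^sub>0 nat) set" where
  "mons_with_supp d F = {m. supp m = F \<and> mdeg m = d}"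

lemma finite_mons_with_supp: assumes "finite F" shows "finite (mons_with_supp d F)"
proof -
  obtain N where "F \<subseteq> {..<N}" using assms by (auto simp: finite_nat_set_iff_bounded)
  hence "mons_with_supp d F \<subseteq> monomials N d"
    by (auto simp: mons_with_supp_def monomials_def in_vars_def)
  thus ?thesis by (rule finite_subset) (rule finite_monomials)
qed

(* Renaming the variables along a bijection F' -> F preserves degrees and supports. *)
lemma card_mons_with_supp_le:
  assumes fF: "finite F" and fF': "finite F'" and c: "card F = card F'"
  shows "card (mons_with_supp d F) \<le> card (mons_with_supp d F')"
proof -
  obtain \<sigma> where \<sigma>: "bij_betw \<sigma> F' F" using finite_same_card_bij[OF fF' fF] c by auto
  define \<phi> :: "(nat \<Rightarrow>\<^sub>0 nat) \<Rightarrow> (nat \<Rightarrow>\<^sub>0 nat)"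
    where "\<phi> m = Abs_poly_mapping (\<lambda>j. if j \<in> F' then expo m (\<sigma> j) else 0)" for m
  have expo_\<phi>: "expo (\<phi> m) j = (if j \<in> F' then expo m (\<sigma> j) else 0)" for m j
    unfolding \<phi>_def by (subst lookup_Abs_poly_mapping) (auto intro: finite_subset[OF _ fF'])
  have sF: "\<sigma> j \<in> F" if "j \<in> F'" for j using \<sigma> that by (auto simp: bij_betw_def)
  have maps: "\<phi> m \<in> mons_with_supp d F'" if m: "m \<in> mons_with_supp d F" for m
  proof -
    have km: "supp m = F" "mdeg m = d" using m by (auto simp: mons_with_supp_def)
    have k: "supp (\<phi> m) = F'"
      using sF km(1) by (auto simp: in_keys_iff expo_\<phi> split: if_splits)
    have "mdeg (\<phi> m) = (\<Sum>j\<in>F'. expo m (\<sigma> j))"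
      using k fF' by (simp add: mdeg_def expo_\<phi>)
    also have "\<dots> = (\<Sum>i\<in>F. expo m i)" by (rule sum.reindex_bij_betw[OF \<sigma>])
    also have "\<dots> = d" using km by (simp add: mdeg_def)
    finally show ?thesis using k by (simp add: mons_with_supp_def)
  qed
  have inj: "inj_on \<phi> (mons_with_supp d F)"
  proof (rule inj_onI)
    fix a b
    assume a: "a \<in> mons_with_supp d F" and b: "b \<in> mons_with_supp d F" and e: "\<phi> a = \<phi> b"
    show "a = b"
    proof (rule poly_mapping_eqI)
      fix i show "expo a i = expo b i"
      proof (cases "i \<in> F")
        case True
        then obtain j where "j \<in> F'" "i = \<sigma> j" using \<sigma> by (auto simp: bij_betw_def)
        thus ?thesis using arg_cong[OF e, of "\<lambda>p. expo p j"] by (simp add: expo_\<phi>)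
      next
        case False thus ?thesis using a b by (auto simp: mons_with_supp_def in_keys_iff)
      qed
    qed
  qed
  show ?thesis by (rule card_inj_on_le[OF inj _ finite_mons_with_supp[OF fF']]) (use maps in blast)
qed

definition support_count :: "nat \<Rightarrow> nat \<Rightarrow> nat" where
  "support_count d k = card (mons_with_supp d {..<k})"

lemma card_mons_with_supp: "finite F \<Longrightarrow> card (mons_with_supp d F) = support_count d (card F)"
  unfolding support_count_def by (rule antisym; rule card_mons_with_supp_le) auto

(* The only monomial of degree |F| with support F is x_F, so support_count is unitriangular. *)
lemma mons_with_supp_card: assumes "finite F" shows "mons_with_supp (card F) F = {sqf_mon F}"
proof
  show "{sqf_mon F} \<subseteq> mons_with_supp (card F) F"
    using assms by (simp add: mons_with_supp_def keys_sqf_mon mdeg_sqf_mon)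
  show "mons_with_supp (card F) F \<subseteq> {sqf_mon F}"
  proof
    fix m assume "m \<in> mons_with_supp (card F) F"
    hence m: "supp m = F" "mdeg m = card F" by (auto simp: mons_with_supp_def)
    hence "squarefree_mon m" by (intro squarefree_if_mdeg_eq_card) simp
    thus "m \<in> {sqf_mon F}" using squarefree_eq_sqf_mon m by auto
  qed
qed

lemma support_count_diag: "support_count d d = 1"
  using card_mons_with_supp[of "{..<d}" d] mons_with_supp_card[of "{..<d}"] by simp

lemma support_count_zero: assumes "d < k" shows "support_count d k = 0"
proof -
  have "mons_with_supp d {..<k} = {}"
  proof (rule ccontr)
    assume "mons_with_supp d {..<k} \<noteq> {}"
    then obtain m where "supp m = {..<k}" "mdeg m = d" by (auto simp: mons_with_supp_def)
    thus False using card_keys_le_mdeg[of m] assms by simp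
  qed
  thus ?thesis by (simp add: support_count_def)
qed

lemma ideal_monomials_by_support:
  assumes G: "\<forall>g\<in>G. squarefree_mon g"
  shows "ideal_monomials n G d = (\<Union>F\<in>supp_family n G. mons_with_supp d F)"
  unfolding ideal_monomials_supp[OF G]
  using supp_family_subset by (auto simp: mons_with_supp_def monomials_def in_vars_def)

lemma card_ideal_monomials:
  assumes G: "\<forall>g\<in>G. squarefree_mon g"
  shows "card (ideal_monomials n G d) =
    card (layer (supp_family n G) d) + (\<Sum>k<d. card (layer (supp_family n G) k) * support_count d k)"
proof -
  have finF: "\<And>F. F \<in> supp_family n G \<Longrightarrow> finite F" by (rule finite_supp_family_member)
  have "card (ideal_monomials n G d) = (\<Sum>F\<in>supp_family n G. card (mons_with_supp d F))"
    unfolding ideal_monomials_by_support[OF G]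
  proof (rule card_UN_disjoint)
    show "finite (supp_family n G)" by (rule finite_supp_family)
    show "\<forall>F\<in>supp_family n G. finite (mons_with_supp d F)"
      using finite_mons_with_supp finF by blast
  qed (auto simp: mons_with_supp_def)
  also have "\<dots> = (\<Sum>F\<in>supp_family n G. support_count d (card F))"
    by (intro sum.cong refl card_mons_with_supp finF)
  also have "\<dots> =
      (\<Sum>k\<in>{..n+d}. (\<Sum>F\<in>{F \<in> supp_family n G. card F = k}. support_count d (card F)))"
  proof (rule sum.group[symmetric, OF finite_supp_family])
    show "card ` supp_family n G \<subseteq> {..n+d}"
    proof
      fix k assume "k \<in> card ` supp_family n G"
      then obtain F where "F \<in> supp_family n G" "k = card F" by auto
      moreover have "card F \<le> n"
        using card_mono[OF _ supp_family_subset[OF \<open>F \<in> supp_family n G\<close>]] by simp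
      ultimately show "k \<in> {..n+d}" by simp
    qed
  qed simp
  also have "\<dots> = (\<Sum>k\<in>{..n+d}. card (layer (supp_family n G) k) * support_count d k)"
    by (intro sum.cong refl) (simp add: layer_def)
  also have "\<dots> = (\<Sum>k\<in>{..d}. card (layer (supp_family n G) k) * support_count d k)"
    by (rule sum.mono_neutral_right) (auto simp: support_count_zero)
  also have "\<dots> =
      card (layer (supp_family n G) d) +
      (\<Sum>k<d. card (layer (supp_family n G) k) * support_count d k)"
    by (simp add: lessThan_Suc_atMost[symmetric] support_count_diag)
  finally show ?thesis .
qed

(* By unitriangularity, equal Hilbert functions force equal f-vectors of the support families. *)
lemma f_vector_eq:
  assumes G: "\<forall>g\<in>G. squarefree_mon g"
    and H: "\<forall>g\<in>H. squarefree_mon g"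
    and eq: "\<forall>d. card (ideal_monomials n G d) = card (ideal_monomials n H d)"
  shows "card (layer (supp_family n G) k) = card (layer (supp_family n H) k)"
proof (induction k rule: less_induct)
  case (less k)
  have "(\<Sum>j<k. card (layer (supp_family n G) j) * support_count k j) =
      (\<Sum>j<k. card (layer (supp_family n H) j) * support_count k j)"
    using less by (intro sum.cong refl) simp
  thus ?case using eq card_ideal_monomials[OF G, of n k] card_ideal_monomials[OF H, of n k] by simp
qed

(* Lexicographic order on subsets of {0..n-1}: A is larger than B iff the smallest element of
   their symmetric difference lies in A.  It is encoded by the weight \<Sum>_{i\<in>A} 2^(n-i),
   because 2^(n-u) exceeds the total weight of any subset of {u+1..n-1}. *)
definition lex_weight :: "nat \<Rightarrow> nat set \<Rightarrow> nat" where
  "lex_weight n A = (\<Sum>i\<in>A. 2 ^ (n - i))"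

lemma sum_pow2_above: "u < n \<Longrightarrow> (\<Sum>v\<in>{u<..<n}. (2::nat) ^ (n - v)) + 2 = 2 ^ (n - u)"
proof (induction n)
  case 0 thus ?case by simp
next
  case (Suc n)
  show ?case
  proof (cases "u = n")
    case True thus ?thesis by simp
  next
    case False
    hence un: "u < n" using Suc.prems by simp
    have e: "{u<..<Suc n} = insert n {u<..<n}" using un by auto
    have "(\<Sum>v\<in>{u<..<Suc n}. (2::nat) ^ (Suc n - v)) = 2 + (\<Sum>v\<in>{u<..<n}. 2 ^ (Suc n - v))"
      unfolding e by simp
    also have "(\<Sum>v\<in>{u<..<n}. (2::nat) ^ (Suc n - v)) = 2 * (\<Sum>v\<in>{u<..<n}. 2 ^ (n - v))"
      by (simp add: sum_distrib_left Suc_diff_le less_imp_le flip: power_Suc)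
    finally show ?thesis using Suc.IH[OF un] un
      by (simp add: Suc_diff_le less_imp_le)
  qed
qed

lemma lex_weight_dominant:
  assumes fX: "finite X" and Y: "Y \<subseteq> {..<n}" and u: "u \<in> X" "u < n" and uv: "\<forall>v\<in>Y. u < v"
  shows "lex_weight n Y < lex_weight n X"
proof -
  have "lex_weight n Y \<le> (\<Sum>v\<in>{u<..<n}. 2 ^ (n - v))"
    unfolding lex_weight_def by (rule sum_mono2) (use Y uv in auto)
  also have "\<dots> < 2 ^ (n - u)" using sum_pow2_above[OF u(2)] by linarith
  also have "\<dots> \<le> lex_weight n X" unfolding lex_weight_def by (rule member_le_sum) (use u fX in auto)
  finally show ?thesis .
qed

lemma lex_weight_split:
  "finite A \<Longrightarrow> lex_weight n A = lex_weight n (A \<inter> B) + lex_weight n (A - B)"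
  unfolding lex_weight_def by (metis Diff_Diff_Int Diff_subset inf.commute sum.subset_diff)

lemma lex_weight_min:
  assumes A: "A \<subseteq> {..<n}" and B: "B \<subseteq> {..<n}" and ne: "A \<noteq> B"
    and m: "Min ((A - B) \<union> (B - A)) \<in> A"
  shows "lex_weight n B < lex_weight n A"
proof -
  let ?S = "(A - B) \<union> (B - A)"
  have fA: "finite A" and fB: "finite B" using A B finite_subset by auto
  have fS: "finite ?S" using fA fB by simp
  have Sne: "?S \<noteq> {}" using ne by blast
  have mS: "Min ?S \<in> ?S" using Min_in[OF fS Sne] .
  hence mAB: "Min ?S \<in> A - B" using m by blast
  have "lex_weight n (B - A) < lex_weight n (A - B)"
  proof (rule lex_weight_dominant)
    show "finite (A - B)" using fA by simp
    show "B - A \<subseteq> {..<n}" using B by blast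
    show "Min ?S \<in> A - B" by (rule mAB)
    show "Min ?S < n" using mAB A by auto
    show "\<forall>v\<in>B - A. Min ?S < v"
    proof
      fix v assume v: "v \<in> B - A"
      hence "Min ?S \<le> v" using fS by (intro Min_le) auto
      moreover have "Min ?S \<noteq> v" using v mAB by auto
      ultimately show "Min ?S < v" by simp
    qed
  qed
  moreover have "lex_weight n A = lex_weight n (A \<inter> B) + lex_weight n (A - B)"
    by (rule lex_weight_split[OF fA])
  moreover have "lex_weight n B = lex_weight n (B \<inter> A) + lex_weight n (B - A)"
    by (rule lex_weight_split[OF fB])
  ultimately show ?thesis by (simp add: Int_commute)
qed

lemma lex_weight_less_min:
  assumes A: "A \<subseteq> {..<n}" and B: "B \<subseteq> {..<n}" and lt: "lex_weight n B < lex_weight n A"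
  shows "A \<noteq> B \<and> Min ((A - B) \<union> (B - A)) \<in> A - B"
proof -
  have ne: "A \<noteq> B" using lt by auto
  let ?S = "(A - B) \<union> (B - A)"
  have fS: "finite ?S" using finite_subset[OF A] finite_subset[OF B] by auto
  have mS: "Min ?S \<in> ?S" using ne fS by (intro Min_in) auto
  have "Min ?S \<notin> B - A"
  proof
    assume "Min ?S \<in> B - A"
    hence "Min ((B - A) \<union> (A - B)) \<in> B" by (simp add: Un_commute)
    hence "lex_weight n A < lex_weight n B" using lex_weight_min[OF B A] ne by metis
    thus False using lt by simp
  qed
  thus ?thesis using ne mS by blast
qed

lemma lex_weight_inj:
  assumes A: "A \<subseteq> {..<n}" and B: "B \<subseteq> {..<n}" and e: "lex_weight n A = lex_weight n B"
  shows "A = B"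
proof (rule ccontr)
  assume ne: "A \<noteq> B"
  let ?S = "(A - B) \<union> (B - A)"
  have fS: "finite ?S" using finite_subset[OF A] finite_subset[OF B] by auto
  have mS: "Min ?S \<in> ?S" using ne fS by (intro Min_in) auto
  show False
  proof (cases "Min ?S \<in> A")
    case True thus False using lex_weight_min[OF A B ne] e by simp
  next
    case False
    hence "Min ((B - A) \<union> (A - B)) \<in> B" using mS by (simp add: Un_commute)
    thus False using lex_weight_min[OF B A] ne e by (metis less_irrefl)
  qed
qed

lemma lex_gt_of_lex_weight:
  assumes A: "A \<subseteq> {..<n}" and B: "B \<subseteq> {..<n}" and lt: "lex_weight n B < lex_weight n A"
  shows "lex_gt (sqf_mon A) (sqf_mon B)"
proof -
  have fA: "finite A" and fB: "finite B" using A B by (auto intro: finite_subset)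
  let ?S = "(A - B) \<union> (B - A)"
  have m: "Min ?S \<in> A - B" using lex_weight_less_min[OF A B lt] by auto
  have fS: "finite ?S" using fA fB by simp
  show ?thesis unfolding lex_gt_def
  proof (intro exI[of _ "Min ?S"] conjI allI impI)
    show "expo (sqf_mon B) (Min ?S) < expo (sqf_mon A) (Min ?S)"
      using m fA fB by (simp add: lookup_sqf_mon)
    fix j assume j: "j < Min ?S"
    have "j \<notin> ?S"
    proof
      assume "j \<in> ?S" hence "Min ?S \<le> j" using fS by (intro Min_le) auto
      thus False using j by simp
    qed
    thus "expo (sqf_mon A) j = expo (sqf_mon B) j" using fA fB by (auto simp: lookup_sqf_mon)
  qed
qed

definition compress :: "nat set \<Rightarrow> nat set \<Rightarrow> nat set \<Rightarrow> nat set" where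
  "compress U V A = (if V \<subseteq> A \<and> U \<inter> A = {} then (A - V) \<union> U else A)"

definition compress_family :: "nat set \<Rightarrow> nat set \<Rightarrow> nat set set \<Rightarrow> nat set set" where
  "compress_family U V \<A> =
     {A\<in>\<A>. compress U V A \<in> \<A>} \<union> compress U V ` {A\<in>\<A>. compress U V A \<notin> \<A>}"

definition compressed :: "nat set \<Rightarrow> nat set \<Rightarrow> nat set set \<Rightarrow> bool" where
  "compressed U V \<A> \<longleftrightarrow> (\<forall>A\<in>\<A>. compress U V A \<in> \<A>)"

definition ksets :: "nat \<Rightarrow> nat \<Rightarrow> nat set set" where
  "ksets n k = {A. A \<subseteq> {..<n} \<and> card A = k}"

lemma finite_ksets: "finite (ksets n k)"
  by (rule finite_subset[of _ "Pow {..<n}"]) (auto simp: ksets_def)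

lemma compress_empty: "compress {} {} A = A"
  by (simp add: compress_def)

lemma compress_active:
  "compress U V A \<noteq> A \<Longrightarrow> V \<subseteq> A \<and> U \<inter> A = {} \<and> compress U V A = (A - V) \<union> U"
  unfolding compress_def by (auto split: if_splits)

lemma inj_on_compress_moved: "inj_on (compress U V) {A. compress U V A \<noteq> A}"
proof (rule inj_onI)
  fix a b assume "a \<in> {A. compress U V A \<noteq> A}" "b \<in> {A. compress U V A \<noteq> A}"
    and e: "compress U V a = compress U V b"
  hence "a = (compress U V a - U) \<union> V" "b = (compress U V b - U) \<union> V"
    using compress_active[of U V a] compress_active[of U V b] by auto
  thus "a = b" using e by simp
qed

lemma card_swap:
  assumes "finite A" "finite U" "finite V" "card U = card V" "V \<subseteq> A" "U \<inter> A = {}"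
  shows "card ((A - V) \<union> U) = card A"
proof -
  have "card ((A - V) \<union> U) = card (A - V) + card U"
    using assms by (intro card_Un_disjoint) auto
  also have "card (A - V) = card A - card V" using assms by (simp add: card_Diff_subset)
  finally show ?thesis using assms card_mono[of A V] by simp
qed

lemma compress_ksets:
  assumes A: "A \<in> ksets n k" and U: "U \<subseteq> {..<n}" and V: "V \<subseteq> {..<n}" and c: "card U = card V"
  shows "compress U V A \<in> ksets n k"
proof (cases "V \<subseteq> A \<and> U \<inter> A = {}")
  case True
  have f: "finite A" "finite U" "finite V"
    using A U V by (auto simp: ksets_def intro: finite_subset)
  show ?thesis using True A U card_swap[OF f c] by (auto simp: compress_def ksets_def)
next
  case False thus ?thesis using A by (auto simp: compress_def)
qed

lemma compress_family_ksets:
  assumes "\<A> \<subseteq> ksets n k" "U \<subseteq> {..<n}" "V \<subseteq> {..<n}" "card U = card V"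
  shows "compress_family U V \<A> \<subseteq> ksets n k"
  using assms compress_ksets unfolding compress_family_def by blast

lemma compress_family_split:
  fixes U V :: "nat set" and \<A> :: "nat set set"
  defines "P \<equiv> {A\<in>\<A>. compress U V A \<in> \<A>}" and "Q \<equiv> {A\<in>\<A>. compress U V A \<notin> \<A>}"
  shows "\<A> = P \<union> Q" "P \<inter> Q = {}" "compress_family U V \<A> = P \<union> compress U V ` Q"
    "P \<inter> compress U V ` Q = {}" "inj_on (compress U V) Q"
  unfolding P_def Q_def compress_family_def
  by (auto intro: inj_on_subset[OF inj_on_compress_moved])

lemma card_compress_family:
  assumes fin: "finite \<A>"
  shows "card (compress_family U V \<A>) = card \<A>"
proof -
  let ?P = "{A\<in>\<A>. compress U V A \<in> \<A>}" and ?Q = "{A\<in>\<A>. compress U V A \<notin> \<A>}"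
  have "card (compress_family U V \<A>) = card ?P + card (compress U V ` ?Q)"
    unfolding compress_family_split(3)
      by (rule card_Un_disjoint) (use fin compress_family_split(4) in auto)
  also have "\<dots> = card ?P + card ?Q" using card_image[OF compress_family_split(5)] by simp
  also have "\<dots> = card \<A>"
    by (subst (3) compress_family_split(1)) (rule card_Un_disjoint[symmetric], use fin in auto)
  finally show ?thesis .
qed

lemma lex_weight_compress:
  assumes A: "A \<subseteq> {..<n}" and U: "U \<subseteq> {..<n}" and V: "V \<subseteq> {..<n}"
    and u: "u \<in> U" and uv: "\<forall>v\<in>V. u < v" and act: "compress U V A \<noteq> A"
  shows "lex_weight n A < lex_weight n (compress U V A)"
proof -
  have a: "V \<subseteq> A" "U \<inter> A = {}" "compress U V A = (A - V) \<union> U" using compress_active[OF act] by auto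
  have fA: "finite A" and fU: "finite U" using A U by (auto intro: finite_subset)
  have "lex_weight n V < lex_weight n U"
    by (rule lex_weight_dominant[OF fU V u _ uv]) (use u U in auto)
  moreover have "lex_weight n ((A - V) \<union> U) = lex_weight n (A - V) + lex_weight n U"
    unfolding lex_weight_def using fA fU a by (intro sum.union_disjoint) auto
  moreover have "lex_weight n A = lex_weight n (A - V) + lex_weight n V"
    unfolding lex_weight_def using fA a by (metis sum.subset_diff add.commute)
  ultimately show ?thesis using a by simp
qed

lemma weight_compress_family:
  assumes fin: "finite \<A>" and sub: "\<A> \<subseteq> ksets n k"
    and U: "U \<subseteq> {..<n}" and V: "V \<subseteq> {..<n}" and u: "u \<in> U" and uv: "\<forall>v\<in>V. u < v"
    and nc: "\<not> compressed U V \<A>"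
  shows "(\<Sum>A\<in>\<A>. lex_weight n A) < (\<Sum>A\<in>compress_family U V \<A>. lex_weight n A)"
proof -
  let ?P = "{A\<in>\<A>. compress U V A \<in> \<A>}" and ?Q = "{A\<in>\<A>. compress U V A \<notin> \<A>}"
  have Qne: "?Q \<noteq> {}" using nc by (auto simp: compressed_def)
  have fQ: "finite ?Q" using fin by simp
  have "(\<Sum>A\<in>\<A>. lex_weight n A) = (\<Sum>A\<in>?P. lex_weight n A) + (\<Sum>A\<in>?Q. lex_weight n A)"
    by (subst compress_family_split(1)) (rule sum.union_disjoint, use fin in auto)
  also have "(\<Sum>A\<in>?Q. lex_weight n A) < (\<Sum>A\<in>?Q. lex_weight n (compress U V A))"
  proof (rule sum_strict_mono[OF fQ Qne])
    fix A assume "A \<in> ?Q"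
    hence "A \<subseteq> {..<n}" "compress U V A \<noteq> A" using sub by (auto simp: ksets_def)
    thus "lex_weight n A < lex_weight n (compress U V A)" using lex_weight_compress[OF _ U V u uv]
      by blast
  qed
  also have "(\<Sum>A\<in>?Q. lex_weight n (compress U V A)) = (\<Sum>A\<in>compress U V ` ?Q. lex_weight n A)"
    using sum.reindex[OF compress_family_split(5), of "lex_weight n"] by (simp add: comp_def)
  also have "(\<Sum>A\<in>?P. lex_weight n A) + (\<Sum>A\<in>compress U V ` ?Q. lex_weight n A) =
      (\<Sum>A\<in>compress_family U V \<A>. lex_weight n A)"
    unfolding compress_family_split(3)
    by (rule sum.union_disjoint[symmetric]) (use fin compress_family_split(4) in auto)
  finally show ?thesis by simp
qed

(* Frankl's shadow lemma: if the family is already compressed along every pair (U - {u}, V - {x})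
   obtained by deleting one element from each side, then compression along (U, V) does not
   enlarge the upper shadow. *)
context
  fixes n k :: nat and U V :: "nat set" and \<A> :: "nat set set"
  assumes sub: "\<A> \<subseteq> ksets n k" and U: "U \<subseteq> {..<n}" and V: "V \<subseteq> {..<n}"
    and c: "card U = card V" and Vne: "V \<noteq> {}"
    and H: "\<forall>x\<in>V. \<exists>u\<in>U. compressed (U - {u}) (V - {x}) \<A>"
begin

lemma in_upper_shadow:
  "D \<subseteq> {..<n} \<Longrightarrow> card D = Suc k \<Longrightarrow> A \<in> \<A> \<Longrightarrow> A \<subseteq> D \<Longrightarrow> D \<in> upper_shadow n k \<A>"
  by (auto simp: upper_shadow_def)

(* If x \<in> V is the element added to A, the smaller compression removes the rest of V. *)
lemma compress_minus_point:
  assumes A: "A \<in> \<A>" and x: "x \<in> V" and VA: "V - {x} \<subseteq> A" and UA: "U \<inter> A = {}"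
  obtains A0 where "A0 \<in> \<A>" "A0 \<subseteq> (A - (V - {x})) \<union> U"
proof -
  obtain u where u: "u \<in> U" "compressed (U - {u}) (V - {x}) \<A>" using H x by blast
  have "compress (U - {u}) (V - {x}) A = (A - (V - {x})) \<union> (U - {u})"
    using VA UA by (auto simp: compress_def)
  moreover have "compress (U - {u}) (V - {x}) A \<in> \<A>" using u(2) A by (simp add: compressed_def)
  ultimately show thesis using that by blast
qed

lemma compress_shadow_of_fixed:
  assumes B: "B \<subseteq> {..<n}" "card B = Suc k" and A': "A' \<in> \<A>" "compress U V A' \<in> \<A>" "A' \<subseteq> B"
  shows "compress U V B \<in> upper_shadow n k \<A>"
proof (cases "V \<subseteq> B \<and> U \<inter> B = {}")
  case False thus ?thesis using in_upper_shadow[OF B A'(1,3)] by (auto simp: compress_def)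
next
  case act: True
  have cB: "compress U V B = (B - V) \<union> U" using act by (simp add: compress_def)
  have cBK: "compress U V B \<subseteq> {..<n}" "card (compress U V B) = Suc k"
    using compress_ksets[of B n "Suc k" U V] B U V c by (auto simp: ksets_def)
  show ?thesis
  proof (cases "V \<subseteq> A'")
    case True
    hence "compress U V A' \<subseteq> compress U V B" using act A'(3) cB by (auto simp: compress_def)
    thus ?thesis using in_upper_shadow[OF cBK A'(2)] by blast
  next
    case False
    then obtain x where x: "x \<in> V" "x \<notin> A'" by blast
    have "card A' = k" using A'(1) sub by (auto simp: ksets_def)
    then obtain y where y: "B = insert y A'"
      using insert_of_card[OF A'(3)] B(2) finite_subset[OF B(1)] by (metis finite_lessThan)
    have "V - {x} \<subseteq> A'" "U \<inter> A' = {}" using act y x by auto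
    then obtain A0 where "A0 \<in> \<A>" "A0 \<subseteq> (A' - (V - {x})) \<union> U"
      using compress_minus_point[OF A'(1) x(1)] by blast
    moreover have "(A' - (V - {x})) \<union> U \<subseteq> compress U V B" using cB x(2) A'(3) by blast
    ultimately show ?thesis using in_upper_shadow[OF cBK] by blast
  qed
qed

lemma shadow_of_moved:
  assumes B: "B \<subseteq> {..<n}" "card B = Suc k"
    and A: "A \<in> \<A>" "compress U V A \<notin> \<A>" "compress U V A \<subseteq> B"
  shows "B \<in> compress_family U V (upper_shadow n k \<A>)"
proof -
  have act: "V \<subseteq> A" "U \<inter> A = {}" "compress U V A = (A - V) \<union> U"
    using compress_active[of U V A] A(1,2) by fastforce+
  have AK: "A \<subseteq> {..<n}" "card A = k" using A(1) sub by (auto simp: ksets_def)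
  have "card (compress U V A) = k" using compress_ksets[of A n k U V] A(1) sub U V c
    by (auto simp: ksets_def)
  then obtain x where x: "x \<notin> compress U V A" "B = insert x (compress U V A)"
    using insert_of_card[OF A(3)] B(2) finite_subset[OF B(1)] by (metis finite_lessThan)
  have Une: "U \<noteq> {}" using c Vne finite_subset[OF V] by auto
  have fixed: "compress U V B = B" using act x Une by (auto simp: compress_def)
  show ?thesis
  proof (cases "x \<in> V")
    case False
    define D where "D = insert x A"
    have DK: "D \<subseteq> {..<n}" "card D = Suc k"
      using B x AK act False finite_subset[OF AK(1)] by (auto simp: D_def)
    have DU: "D \<in> upper_shadow n k \<A>" using in_upper_shadow[OF DK A(1)]
      by (simp add: D_def subset_insertI)
    have "compress U V D = B"
      using act x False by (auto simp: D_def compress_def)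
    thus ?thesis using DU fixed unfolding compress_family_def by blast
  next
    case True
    obtain A0 where "A0 \<in> \<A>" "A0 \<subseteq> (A - (V - {x})) \<union> U"
      using compress_minus_point[OF A(1) True] act by blast
    moreover have "(A - (V - {x})) \<union> U \<subseteq> B" using x act by blast
    ultimately have "B \<in> upper_shadow n k \<A>" using in_upper_shadow[OF B] by blast
    thus ?thesis using fixed by (simp add: compress_family_def)
  qed
qed

lemma upper_shadow_compress:
  "upper_shadow n k (compress_family U V \<A>) \<subseteq> compress_family U V (upper_shadow n k \<A>)"
proof
  fix B assume "B \<in> upper_shadow n k (compress_family U V \<A>)"
  then obtain A' where B: "B \<subseteq> {..<n}" "card B = Suc k"
    and A': "A' \<in> compress_family U V \<A>" "A' \<subseteq> B"
    by (auto simp: upper_shadow_def)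
  show "B \<in> compress_family U V (upper_shadow n k \<A>)"
  proof (cases "A' \<in> \<A> \<and> compress U V A' \<in> \<A>")
    case True
    hence "B \<in> upper_shadow n k \<A>" using in_upper_shadow[OF B] A'(2) by blast
    moreover have "compress U V B \<in> upper_shadow n k \<A>"
      using compress_shadow_of_fixed[OF B] True A'(2) by blast
    ultimately show ?thesis by (simp add: compress_family_def)
  next
    case False
    then obtain A where "A \<in> \<A>" "compress U V A \<notin> \<A>" "A' = compress U V A"
      using A'(1) by (auto simp: compress_family_def)
    thus ?thesis using shadow_of_moved[OF B] A'(2) by blast
  qed
qed

lemma card_upper_shadow_compress:
  "card (upper_shadow n k (compress_family U V \<A>)) \<le> card (upper_shadow n k \<A>)"
proof -
  have f: "finite (upper_shadow n k \<A>)"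
    by (rule finite_subset[of _ "Pow {..<n}"]) (auto simp: upper_shadow_def)
  have "card (upper_shadow n k (compress_family U V \<A>)) \<le>
      card (compress_family U V (upper_shadow n k \<A>))"
    by (rule card_mono[OF _ upper_shadow_compress]) (simp add: compress_family_def f)
  also have "\<dots> = card (upper_shadow n k \<A>)" by (rule card_compress_family[OF f])
  finally show ?thesis .
qed

end

(* The pairs we compress along: disjoint nonempty sets of equal size where U has an element
   below all of V, so that compression increases lex weight. *)
definition admissible :: "nat \<Rightarrow> nat set \<Rightarrow> nat set \<Rightarrow> bool" where
  "admissible n U V \<longleftrightarrow> U \<subseteq> {..<n} \<and> V \<subseteq> {..<n} \<and> U \<inter> V = {} \<and> card U = card V \<and> V \<noteq> {} \<and>
     (\<exists>u\<in>U. \<forall>v\<in>V. u < v)"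

definition lex_initial :: "nat \<Rightarrow> nat \<Rightarrow> nat set set \<Rightarrow> bool" where
  "lex_initial n k \<A> \<longleftrightarrow> (\<forall>B\<in>\<A>. \<forall>A\<in>ksets n k. lex_weight n B < lex_weight n A \<longrightarrow> A \<in> \<A>)"

(* A family compressed along all admissible pairs is an initial lex segment: if B \<in> \<A> and
   A is lex-larger, compressing B along (A - B, B - A) yields A. *)
lemma compressed_lex_initial:
  assumes sub: "\<A> \<subseteq> ksets n k" and all: "\<forall>U V. admissible n U V \<longrightarrow> compressed U V \<A>"
  shows "lex_initial n k \<A>"
  unfolding lex_initial_def
proof (intro ballI impI)
  fix B A assume B: "B \<in> \<A>" and A: "A \<in> ksets n k" and lt: "lex_weight n B < lex_weight n A"
  have AK: "A \<subseteq> {..<n}" "card A = k" and BK: "B \<subseteq> {..<n}" "card B = k"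
    using A B sub by (auto simp: ksets_def)
  have fA: "finite A" and fB: "finite B" using AK BK by (auto intro: finite_subset)
  let ?S = "(A - B) \<union> (B - A)"
  have m: "A \<noteq> B" "Min ?S \<in> A - B" using lex_weight_less_min[OF AK(1) BK(1) lt] by auto
  have fS: "finite ?S" using fA fB by simp
  have cAB: "card (A - B) = card (B - A)"
    using AK BK fA fB by (metis card_Diff_subset_Int finite_Int inf_commute)
  have "admissible n (A - B) (B - A)"
    unfolding admissible_def
  proof (intro conjI)
    show "A - B \<subseteq> {..<n}" "B - A \<subseteq> {..<n}" "(A - B) \<inter> (B - A) = {}" using AK BK by auto
    show "card (A - B) = card (B - A)" by (rule cAB)
    show "B - A \<noteq> {}"
    proof
      assume "B - A = {}"
      hence "card (A - B) = 0" using cAB by (metis card.empty)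
      thus False using m fA by (metis card_0_eq empty_iff finite_Diff)
    qed
    show "\<exists>u\<in>A - B. \<forall>v\<in>B - A. u < v"
    proof (intro bexI[OF _ m(2)] ballI)
      fix v assume v: "v \<in> B - A"
      hence "Min ?S \<le> v" using fS by (intro Min_le) auto
      moreover have "Min ?S \<noteq> v" using v m by auto
      ultimately show "Min ?S < v" by simp
    qed
  qed
  hence "compress (A - B) (B - A) B \<in> \<A>" using all B by (simp add: compressed_def)
  moreover have "compress (A - B) (B - A) B = A" by (auto simp: compress_def)
  ultimately show "A \<in> \<A>" by simp
qed

lemma lex_initial_subset:
  assumes dA: "lex_initial n k \<A>" and dL: "lex_initial n k \<L>"
    and sA: "\<A> \<subseteq> ksets n k" and sL: "\<L> \<subseteq> ksets n k"
    and A: "A \<in> \<A>" "A \<notin> \<L>"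
  shows "\<L> \<subseteq> \<A>"
proof
  fix B assume B: "B \<in> \<L>"
  have AK: "A \<in> ksets n k" and BK: "B \<in> ksets n k" using A B sA sL by auto
  have "\<not> lex_weight n B < lex_weight n A" using dL B AK A(2) by (auto simp: lex_initial_def)
  moreover have "lex_weight n A \<noteq> lex_weight n B"
    using lex_weight_inj[of A n B] AK BK A B by (auto simp: ksets_def)
  ultimately have "lex_weight n A < lex_weight n B" by simp
  thus "B \<in> \<A>" using dA A(1) BK by (auto simp: lex_initial_def)
qed

lemma lex_initial_unique:
  assumes dA: "lex_initial n k \<A>" and dL: "lex_initial n k \<L>"
    and sA: "\<A> \<subseteq> ksets n k" and sL: "\<L> \<subseteq> ksets n k"
    and c: "card \<A> = card \<L>"
  shows "\<A> = \<L>"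
proof (rule ccontr)
  have fA: "finite \<A>" by (rule finite_subset[OF sA finite_ksets])
  have fL: "finite \<L>" by (rule finite_subset[OF sL finite_ksets])
  assume "\<A> \<noteq> \<L>"
  then consider A where "A \<in> \<A>" "A \<notin> \<L>" | A where "A \<in> \<L>" "A \<notin> \<A>" by blast
  thus False
  proof cases
    case 1
    hence ps: "\<L> \<subset> \<A>" using lex_initial_subset[OF dA dL sA sL] by blast
    show False using psubset_card_mono[OF fA ps] c by linarith
  next
    case 2
    hence ps: "\<A> \<subset> \<L>" using lex_initial_subset[OF dL dA sL sA] by blast
    show False using psubset_card_mono[OF fL ps] c by linarith
  qed
qed

(* If all admissible pairs with smaller first component are already compressed, then the
   hypothesis of the shadow lemma holds for any admissible pair (U, V): delete from U an
   element other than the one below V (or, if |U| = 1, the only one). *)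
lemma shadow_lemma_hyp:
  assumes adm: "admissible n U V"
    and smaller: "\<And>U' V'. admissible n U' V' \<Longrightarrow> card U' < card U \<Longrightarrow> compressed U' V' \<A>"
  shows "\<forall>x\<in>V. \<exists>u\<in>U. compressed (U - {u}) (V - {x}) \<A>"
proof
  fix x assume x: "x \<in> V"
  have U: "U \<subseteq> {..<n}" and V: "V \<subseteq> {..<n}" and dj: "U \<inter> V = {}" and cUV: "card U = card V"
    using adm by (auto simp: admissible_def)
  obtain u0 where u0: "u0 \<in> U" "\<forall>v\<in>V. u0 < v" using adm by (auto simp: admissible_def)
  have fU: "finite U" and fV: "finite V" using U V by (auto intro: finite_subset)
  show "\<exists>u\<in>U. compressed (U - {u}) (V - {x}) \<A>"
  proof (cases "card U = 1")
    case True
    hence "U = {u0}" "V = {x}" using u0(1) x cUV fU fV by (metis card_1_singletonE singletonD)+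
    thus ?thesis using u0 by (intro bexI[of _ u0]) (auto simp: compressed_def compress_empty)
  next
    case False
    hence two: "card U \<ge> 2" using u0 fU card_0_eq[of U] by (cases "card U") auto
    then obtain u where u: "u \<in> U" "u \<noteq> u0"
      using u0 by (metis card_le_Suc0_iff_eq fU not_less_eq_eq numeral_2_eq_2)
    have "admissible n (U - {u}) (V - {x})"
      unfolding admissible_def
    proof (intro conjI)
      show "U - {u} \<subseteq> {..<n}" "V - {x} \<subseteq> {..<n}" "(U - {u}) \<inter> (V - {x}) = {}" using U V dj by auto
      show "card (U - {u}) = card (V - {x})" using u x cUV fU fV by simp
      show "V - {x} \<noteq> {}"
      proof
        assume "V - {x} = {}"
        hence "V = {x}" using x by blast
        thus False using cUV two by simp
      qed
      show "\<exists>u\<in>U - {u}. \<forall>v\<in>V - {x}. u < v" using u0 u by auto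
    qed
    moreover have "card (U - {u}) < card U" using u fU two by simp
    ultimately show ?thesis using smaller u by blast
  qed
qed

(* Among the families of k-sets with the same size and no larger upper shadow than \<A>, one of
   maximal total lex weight is compressed along every admissible pair. *)
lemma fully_compressed_family:
  assumes sA: "\<A> \<subseteq> ksets n k"
  obtains \<B> where "\<B> \<subseteq> ksets n k" "card \<B> = card \<A>"
    "card (upper_shadow n k \<B>) \<le> card (upper_shadow n k \<A>)"
    "\<forall>U V. admissible n U V \<longrightarrow> compressed U V \<B>"
proof -
  define S where "S = {\<B>. \<B> \<subseteq> ksets n k \<and> card \<B> = card \<A> \<and>
    card (upper_shadow n k \<B>) \<le> card (upper_shadow n k \<A>)}"
  define W where "W \<B> = (\<Sum>B\<in>\<B>. lex_weight n B)" for \<B>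
  have fS: "finite S"
    by (rule finite_subset[of _ "Pow (ksets n k)"]) (auto simp: S_def finite_ksets)
  have "\<A> \<in> S" using sA by (simp add: S_def)
  hence "Max (W ` S) \<in> W ` S" using fS by (intro Max_in) auto
  then obtain \<B> where BS: "\<B> \<in> S" and "W \<B> = Max (W ` S)" by auto
  hence Bmax: "W \<B>' \<le> W \<B>" if "\<B>' \<in> S" for \<B>' using that fS by simp
  have sB: "\<B> \<subseteq> ksets n k" and cB: "card \<B> = card \<A>"
    and uB: "card (upper_shadow n k \<B>) \<le> card (upper_shadow n k \<A>)"
    using BS by (auto simp: S_def)
  have fB: "finite \<B>" by (rule finite_subset[OF sB finite_ksets])
  have "compressed U V \<B>" if "admissible n U V" for U V
    using that
  proof (induction "card U" arbitrary: U V rule: less_induct)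
    case less
    show ?case
    proof (rule ccontr)
      assume nc: "\<not> compressed U V \<B>"
      have U: "U \<subseteq> {..<n}" and V: "V \<subseteq> {..<n}" and cUV: "card U = card V" and Vne: "V \<noteq> {}"
        using less.prems by (auto simp: admissible_def)
      obtain u0 where u0: "u0 \<in> U" "\<forall>v\<in>V. u0 < v" using less.prems by (auto simp: admissible_def)
      have H: "\<forall>x\<in>V. \<exists>u\<in>U. compressed (U - {u}) (V - {x}) \<B>"
        by (rule shadow_lemma_hyp[OF less.prems less.hyps])
      have "compress_family U V \<B> \<in> S"
        using compress_family_ksets[OF sB U V cUV] card_compress_family[OF fB] cB
          card_upper_shadow_compress[OF sB U V cUV Vne H] uB
        by (simp add: S_def)
      hence "W (compress_family U V \<B>) \<le> W \<B>" by (rule Bmax)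
      moreover have "W \<B> < W (compress_family U V \<B>)"
        unfolding W_def by (rule weight_compress_family[OF fB sB U V u0 nc])
      ultimately show False by simp
    qed
  qed
  thus thesis using that sB cB uB by blast
qed

theorem upper_shadow_lex_minimal:
  assumes sA: "\<A> \<subseteq> ksets n k" and sL: "\<L> \<subseteq> ksets n k" and dL: "lex_initial n k \<L>"
    and c: "card \<L> = card \<A>"
  shows "card (upper_shadow n k \<L>) \<le> card (upper_shadow n k \<A>)"
proof -
  obtain \<B> where sB: "\<B> \<subseteq> ksets n k" and cB: "card \<B> = card \<A>"
    and uB: "card (upper_shadow n k \<B>) \<le> card (upper_shadow n k \<A>)"
    and all: "\<forall>U V. admissible n U V \<longrightarrow> compressed U V \<B>"
    using fully_compressed_family[OF sA] by blast
  have "\<B> = \<L>"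
    using lex_initial_unique[OF compressed_lex_initial[OF sB all] dL sB sL] cB c by simp
  thus ?thesis using uB by simp
qed

lemma lex_initial_of_squarefree_lex:
  assumes lex: "squarefree_lex n (L :: 'k::field poly set)"
    and G: "\<forall>g\<in>G. squarefree_mon g" and LG: "L = mon_ideal n G"
  shows "lex_initial n d (layer (supp_family n G) d)"
  unfolding lex_initial_def
proof (intro ballI impI)
  fix B A assume B: "B \<in> layer (supp_family n G) d" and A: "A \<in> ksets n d"
    and lt: "lex_weight n B < lex_weight n A"
  have Bn: "B \<subseteq> {..<n}" "card B = d" "B \<in> supp_family n G"
    using B supp_family_subset by (auto simp: layer_def)
  have An: "A \<subseteq> {..<n}" "card A = d" using A by (auto simp: ksets_def)
  have fA: "finite A" and fB: "finite B" using An Bn by (auto intro: finite_subset)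
  have "(monom (sqf_mon B) :: 'k poly) \<in> L" using monom_in_mon_ideal[OF G fB, where 'k='k] Bn LG
    by simp
  moreover have "lex_gt (sqf_mon A) (sqf_mon B)" by (rule lex_gt_of_lex_weight[OF An(1) Bn(1) lt])
  moreover have "in_vars n (sqf_mon A)" "in_vars n (sqf_mon B)"
    using An Bn fA fB by (auto simp: in_vars_def keys_sqf_mon)
  moreover have "mdeg (sqf_mon A) = mdeg (sqf_mon B)" using An Bn fA fB by (simp add: mdeg_sqf_mon)
  ultimately have "(monom (sqf_mon A) :: 'k poly) \<in> L"
    using lex squarefree_sqf_mon[OF fA] squarefree_sqf_mon[OF fB] unfolding squarefree_lex_def
      by blast
  hence "A \<in> supp_family n G" using monom_in_mon_ideal[OF G fA, where 'k='k] LG by simp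
  thus "A \<in> layer (supp_family n G) d" using An by (simp add: layer_def)
qed

lemma layer_ksets: "layer (supp_family n G) d \<subseteq> ksets n d"
  using supp_family_subset by (auto simp: layer_def ksets_def)

lemma m1_squarefree_lex_le:
  fixes I L :: "'k::field poly set"
  assumes I: "squarefree_monomial_ideal n I" and lex: "squarefree_lex n L"
    and hilb: "\<forall>d. kdim (degcomp L d) = kdim (degcomp I d)"
  shows "kdim (m1 n (degcomp L d)) \<le> kdim (m1 n (degcomp I d))"
proof -
  obtain GI where GI: "\<forall>g\<in>GI. squarefree_mon g" "I = mon_ideal n GI"
    using sqf_ideal_mon_ideal[OF I] by blast
  obtain GL where GL: "\<forall>g\<in>GL. squarefree_mon g" "L = mon_ideal n GL"
    using sqf_ideal_mon_ideal[of n L] lex by (auto simp: squarefree_lex_def)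
  have hilb': "card (ideal_monomials n GL e) = card (ideal_monomials n GI e)" for e
    using hilb GI(2) GL(2) kdim_deg by metis
  have fv: "card (layer (supp_family n GL) e) = card (layer (supp_family n GI) e)" for e
    by (rule f_vector_eq[OF GL(1) GI(1)]) (simp add: hilb')
  have "card (upper_shadow n d (layer (supp_family n GL) d)) \<le>
      card (upper_shadow n d (layer (supp_family n GI) d))"
    by (rule upper_shadow_lex_minimal[OF layer_ksets layer_ksets
          lex_initial_of_squarefree_lex[OF lex GL] fv])
  hence "card (var_multiples n (ideal_monomials n GL d)) \<le>
      card (var_multiples n (ideal_monomials n GI d))"
    using card_var_multiples[OF GL(1), of n d] card_var_multiples[OF GI(1), of n d]
      hilb'[of "Suc d"] fv[of "Suc d"] by linarith
  thus ?thesis using GI(2) GL(2) kdim_m1 by metis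
qed

lemma gotzmann_if_growth_le:
  fixes I L :: "'k::field poly set"
  assumes got: "gotzmann n I"
    and hilb: "\<forall>d. kdim (degcomp L d) = kdim (degcomp I d)"
    and growth: "\<And>d. kdim (m1 n (degcomp L d)) \<le> kdim (m1 n (degcomp I d))"
  shows "gotzmann n L"
  unfolding gotzmann_def
proof (intro allI impI)
  fix d and J :: "'k poly set"
  assume "homogeneous_ideal n J \<and> kdim (degcomp J d) = kdim (degcomp L d)"
  hence "kdim (m1 n (degcomp I d)) \<le> kdim (m1 n (degcomp J d))"
    using got hilb unfolding gotzmann_def by simp
  thus "kdim (m1 n (degcomp L d)) \<le> kdim (m1 n (degcomp J d))" using growth[of d] by linarith
qed

theorem lemma3p4:
  fixes n :: nat and I L :: "('k::field) poly set"
  assumes "squarefree_monomial_ideal n I"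
    and "gotzmann n I"
    and "squarefree_lex n L"
    and "\<forall>d. kdim (degcomp L d) = kdim (degcomp I d)"
  shows "gotzmann n L"
  using gotzmann_if_growth_le[OF assms(2,4) m1_squarefree_lex_le[OF assms(1,3,4)]] .

end
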